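(* Let $n\ge4$ and let $D_{\mathbf a}=\sum_{i=1}^{n+1}a_iD_i$ be a framing of $\mathbb P^n$ (fan matrix $V=(\mathbf e_1\cdots\mathbf e_n\ -\mathbf 1)$) with $a_1\le\dots\le a_{n+1}$, $\gcd(a_1,\dots,a_{n+1})=1$, satisfying (a) $\operatorname{conv}(\nabla'\cap N)=\operatorname{conv}\big(\{\mathbf 0\}\cup\{[a_n/a_{n-i+1}]\mathbf e_i:1\le i\le n\}\big)$ where $\nabla'=\operatorname{conv}(\mathbf 0,\mathbf e_1,\tfrac{a_n}{a_{n-1}}\mathbf e_2,\dots,\tfrac{a_n}{a_1}\mathbf e_n)$, and (b) $d_i=d_j=1$ for some $i\ne j$, where $d_k=\gcd\{a_l:l\ne k\}$. Let $(\mathbb X_{\mathbf a},\mathbf b)$ be the $f$-dual, with fan matrix $\Lambda_{\mathbf a}$, $\Delta_{\mathbf b}=\{\mathbf n:\Lambda_{\mathbf a}^T\mathbf n\ge-\mathbf b\}$, $\Delta_{-K}=\{\mathbf n:\Lambda_{\mathbf a}^T\mathbf n\ge-\mathbf 1\}$ and $m_{Y^\vee}:=l(\Delta_{\mathbf b})-1-n-\sum_{\Theta\text{ facet of }\Delta_{-K}}l^*(\Theta)$. Then the following are equivalent: (1) $m_{Y^\vee}=1$; (2) $l(\Delta_{\mathbf b})=l(\nabla)=n+2$, where $\nabla=\operatorname{conv}(V)$; (3) $[\Delta_{\mathbf b}]=\nabla$; (4) $[a_n/a_1]=1$.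
   Context: $[x]$ for a real number is its integer part; for a polytope $P$, $[P]$ is the convex hull of its lattice points, $l(P)$ the number of its lattice points, $l^*(P)$ the number of lattice points in its relative interior. $D_1,\dots,D_{n+1}$ are the torus-invariant prime divisors of $\mathbb P^n$. The $f$-dual: $\Delta_{\mathbf a}=\{\mathbf m:V^T\mathbf m\ge-\mathbf a\}$ (a lattice polytope here), $\mathbb X_{\mathbf a}$ is the toric variety of the fan of cones over the faces of $\Delta_{\mathbf a}$, whose fan matrix $\Lambda_{\mathbf a}=(\boldsymbol\lambda_j)$ consists of the primitive generators of rays through the vertices of $\Delta_{\mathbf a}$, and $b_j=\max(\{1\}\cup\{-\langle\mathbf v_i,\boldsymbol\lambda_j\rangle\}_i)$, $\mathbf v_i$ the columns of $V$. *)

theory Defs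
  imports "HOL-Analysis.Analysis"
begin

definition latt :: "(real^'n::finite) set" where
  "latt = {x. \<forall>i. x $ i \<in> \<int>}"

text \<open>l(P): number of lattice points; l^*(P): lattice points in the relative interior;
  [P]: convex hull of the lattice points.\<close>
definition lpts :: "(real^'n::finite) set \<Rightarrow> nat" where
  "lpts P = card (P \<inter> latt)"

definition ilpts :: "(real^'n::finite) set \<Rightarrow> nat" where
  "ilpts P = card (rel_interior P \<inter> latt)"

definition lhull :: "(real^'n::finite) set \<Rightarrow> (real^'n) set" where
  "lhull P = convex hull (P \<inter> latt)"

text \<open>Standard basis vector e_i (i in 1..n), coordinates identified with 'n via ix.\<close>
definition ebas :: "(nat \<Rightarrow> 'n::finite) \<Rightarrow> nat \<Rightarrow> real^'n" where
  "ebas ix i = axis (ix i) 1"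

definition vcol :: "(nat \<Rightarrow> 'n::finite) \<Rightarrow> nat \<Rightarrow> nat \<Rightarrow> real^'n" where
  "vcol ix n i = (if i \<le> n then ebas ix i else (\<chi> j. -1))"

definition Delta_a :: "(nat \<Rightarrow> 'n::finite) \<Rightarrow> nat \<Rightarrow> (nat \<Rightarrow> int) \<Rightarrow> (real^'n) set" where
  "Delta_a ix n a = {m. \<forall>i\<in>{1..n+1}. vcol ix n i \<bullet> m \<ge> - of_int (a i)}"

definition prim :: "real^'n::finite \<Rightarrow> real^'n" where
  "prim w = (THE u. u \<in> latt \<and> (\<exists>c>0. u = c *\<^sub>R w) \<and>
                    (\<forall>c. 0 < c \<and> c < 1 \<longrightarrow> c *\<^sub>R u \<notin> latt))"

text \<open>Columns of the fan matrix Lambda_a of the f-dual X_a (as a set of vectors).\<close>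
definition Lam :: "(nat \<Rightarrow> 'n::finite) \<Rightarrow> nat \<Rightarrow> (nat \<Rightarrow> int) \<Rightarrow> (real^'n) set" where
  "Lam ix n a = prim ` {w. w extreme_point_of Delta_a ix n a}"

definition bvec :: "(nat \<Rightarrow> 'n::finite) \<Rightarrow> nat \<Rightarrow> real^'n \<Rightarrow> real" where
  "bvec ix n lam = Max (insert 1 {- (vcol ix n i \<bullet> lam) | i. i \<in> {1..n+1}})"

definition Delta_b :: "(nat \<Rightarrow> 'n::finite) \<Rightarrow> nat \<Rightarrow> (nat \<Rightarrow> int) \<Rightarrow> (real^'n) set" where
  "Delta_b ix n a = {x. \<forall>lam\<in>Lam ix n a. lam \<bullet> x \<ge> - bvec ix n lam}"

definition Delta_mK :: "(nat \<Rightarrow> 'n::finite) \<Rightarrow> nat \<Rightarrow> (nat \<Rightarrow> int) \<Rightarrow> (real^'n) set" where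
  "Delta_mK ix n a = {x. \<forall>lam\<in>Lam ix n a. lam \<bullet> x \<ge> -1}"

definition mYv :: "(nat \<Rightarrow> 'n::finite) \<Rightarrow> nat \<Rightarrow> (nat \<Rightarrow> int) \<Rightarrow> int" where
  "mYv ix n a = int (lpts (Delta_b ix n a)) - 1 - int n
      - (\<Sum>\<Theta>\<in>{F. F facet_of Delta_mK ix n a}. int (ilpts \<Theta>))"

definition nabla :: "(nat \<Rightarrow> 'n::finite) \<Rightarrow> nat \<Rightarrow> (real^'n) set" where
  "nabla ix n = convex hull (vcol ix n ` {1..n+1})"

definition nabla' :: "(nat \<Rightarrow> 'n::finite) \<Rightarrow> nat \<Rightarrow> (nat \<Rightarrow> int) \<Rightarrow> (real^'n) set" where
  "nabla' ix n a = convex hull (insert 0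
      {(of_int (a n) / of_int (a (n - i + 1))) *\<^sub>R ebas ix i | i. i \<in> {1..n}})"

definition dgcd :: "nat \<Rightarrow> (nat \<Rightarrow> int) \<Rightarrow> nat \<Rightarrow> int" where
  "dgcd n a k = Gcd (a ` ({1..n+1} - {k}))"

end

theory Submission
  imports Defs
begin

text \<open>\<open>\<Delta>\<^sub>a\<close> is the simplex with vertices \<open>W\<^sub>i\<close>, where \<open>\<langle>W\<^sub>i, x\<rangle> = \<sigma> x\<^sub>i - \<Sum>\<^sub>k a\<^sub>k x\<^sub>k\<close>
  with \<open>\<sigma> = a\<^sub>1 + \<dots> + a\<^sub>n\<^sub>+\<^sub>1\<close> and \<open>x\<^sub>n\<^sub>+\<^sub>1 = 0\<close>. Hence \<open>\<Delta>\<^sub>b\<close> is cut out by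
  \<open>\<langle>W\<^sub>i, x\<rangle> \<ge> -max {a\<^sub>k | k \<noteq> i}\<close>, and a short integrality argument shows that its lattice points
  are exactly the \<open>n + 2\<close> lattice points \<open>0, e\<^sub>1, \<dots>, e\<^sub>n, -\<one>\<close> of \<open>\<nabla>\<close> as long as
  \<open>a\<^sub>n < 2 a\<^sub>1\<close>, while \<open>2 e\<^sub>1\<close> is an extra one otherwise. On the other side, a lattice point
  on a facet of \<open>\<Delta>\<^sub>-\<^sub>K\<close> always lies on a second facet, so no facet has a lattice point in
  its relative interior and \<open>mYv = l(\<Delta>\<^sub>b) - n - 1\<close>. The four conditions all say
  \<open>\<Delta>\<^sub>b \<inter> N = \<nabla> \<inter> N\<close>.\<close>

lemma Ints_pos_imp_ge_1:
  fixes z :: real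
  assumes "z \<in> \<int>" "0 < z"
  shows "1 \<le> z"
  using Ints_nonzero_abs_ge1[OF assms(1)] assms(2) by simp

lemma Ints_less_imp_add_1_le:
  fixes z w :: real
  assumes "z \<in> \<int>" "w \<in> \<int>" "z < w"
  shows "z + 1 \<le> w"
  using Ints_pos_imp_ge_1[of "w - z"] assms by simp

lemma convex_comb_eq_lower_bound:
  fixes p q b u :: real
  assumes "0 < u" "u < 1" "(1 - u) * p + u * q = b" "b \<le> p" "b \<le> q"
  shows "p = b"
proof -
  have "(1 - u) * (p - b) + u * (q - b) = 0" using assms(3) by (simp add: algebra_simps)
  moreover have "0 \<le> (1 - u) * (p - b)" "0 \<le> u * (q - b)" using assms by auto
  ultimately have "(1 - u) * (p - b) = 0" by linarith
  then show ?thesis using assms(2) by simp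
qed

lemma extreme_point_of_add_diff:
  assumes "x extreme_point_of D" "x + d \<in> D" "x - d \<in> D"
  shows "d = 0"
proof (rule ccontr)
  assume "d \<noteq> 0"
  then have "x - d \<noteq> x + d" by (simp add: algebra_simps flip: scaleR_2)
  moreover have "x = (1 - 1/2) *\<^sub>R (x - d) + (1/2) *\<^sub>R (x + d)"
    by (simp add: scaleR_diff_right scaleR_add_right flip: scaleR_add_left)
  ultimately have "x \<in> open_segment (x - d) (x + d)"
    unfolding in_segment by (intro conjI exI[of _ "1/2"]) auto
  then show False using assms unfolding extreme_point_of_def by blast
qed

subsection \<open>Extreme points of a scaled simplex\<close>

lemma sum_axis_nth [simp]: "sum (($) (axis j c)) UNIV = c"
  by (simp add: axis_def if_distrib cong: if_cong)

definition scaled_simplex :: "real \<Rightarrow> (real^'n::finite) set" where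
  "scaled_simplex s = {y. (\<forall>j. 0 \<le> y $ j) \<and> sum (($) y) UNIV \<le> s}"

lemma extreme_point_of_scaled_simplex_cases:
  fixes y :: "real^'n::finite"
  assumes y: "y extreme_point_of scaled_simplex s"
  shows "y = 0 \<or> (\<exists>j. y = axis j s)"
proof -
  have yS: "y \<in> scaled_simplex s" using y extreme_point_of_def by blast
  then have nonneg: "0 \<le> y $ j" for j by (simp add: scaled_simplex_def)
  define slack where "slack = s - sum (($) y) UNIV"
  have "0 \<le> slack" using yS by (simp add: scaled_simplex_def slack_def)
  \<comment> \<open>moving mass between two positive coordinates, or between one and the slack, stays inside\<close>
  have one_pos: "y $ l = 0" if "0 < y $ j" "l \<noteq> j" for j l
  proof (rule ccontr)
    assume "y $ l \<noteq> 0"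
    define e where "e = min (y $ j) (y $ l)"
    have e: "0 < e" "e \<le> y $ j" "e \<le> y $ l" using that \<open>y $ l \<noteq> 0\<close> nonneg[of l]
      by (auto simp: e_def)
    define d where "d = axis j e - axis l e"
    have "sum (($) d) UNIV = 0" by (simp add: d_def sum_subtractf)
    then have "y + d \<in> scaled_simplex s" "y - d \<in> scaled_simplex s"
      using yS e nonneg that(2)
      by (auto simp: scaled_simplex_def d_def axis_def sum.distrib sum_subtractf)
    then have "d = 0" by (rule extreme_point_of_add_diff[OF y])
    then have "d $ j = 0" by simp
    then show False using e that(2) by (simp add: d_def axis_def)
  qed
  have no_slack: "slack = 0" if "0 < y $ j" for j
  proof (rule ccontr)
    assume "slack \<noteq> 0"
    define e where "e = min (y $ j) slack"
    have e: "0 < e" "e \<le> y $ j" "e \<le> slack" using that \<open>slack \<noteq> 0\<close> \<open>0 \<le> slack\<close>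
      by (auto simp: e_def)
    define d where "d = axis j e"
    have "sum (($) d) UNIV = e" by (simp add: d_def axis_def)
    then have "y + d \<in> scaled_simplex s" "y - d \<in> scaled_simplex s"
      using yS e nonneg
      by (auto simp: scaled_simplex_def d_def axis_def sum.distrib sum_subtractf slack_def)
    then have "d = 0" by (rule extreme_point_of_add_diff[OF y])
    then have "d $ j = 0" by simp
    then show False using e by (simp add: d_def)
  qed
  show ?thesis
  proof (cases "\<exists>j. 0 < y $ j")
    case False
    then show ?thesis using nonneg by (simp add: vec_eq_iff not_less order_antisym)
  next
    case True
    then obtain j where j: "0 < y $ j" by blast
    have y_eq: "y = axis j (y $ j)" using one_pos[OF j] by (simp add: vec_eq_iff axis_def)
    have "sum (($) y) UNIV = y $ j" by (subst y_eq) (simp add: axis_def)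
    then have "y $ j = s" using no_slack[OF j] by (simp add: slack_def)
    then show ?thesis using y_eq by auto
  qed
qed

lemma extreme_point_of_scaled_simplex_vertex:
  fixes v :: "real^'n::finite"
  assumes "0 \<le> s" and v: "v = 0 \<or> (\<exists>j. v = axis j s)"
  shows "v extreme_point_of scaled_simplex s"
  unfolding extreme_point_of_def
proof (intro conjI ballI)
  show vS: "v \<in> scaled_simplex s" using assms by (auto simp: scaled_simplex_def axis_def)
  fix p q :: "real^'n" assume p: "p \<in> scaled_simplex s" and q: "q \<in> scaled_simplex s"
  show "v \<notin> open_segment p q"
  proof
    assume vpq: "v \<in> open_segment p q"
    then obtain u where u: "0 < u" "u < 1" "v = (1 - u) *\<^sub>R p + u *\<^sub>R q"
      unfolding in_segment by auto
    have "v \<noteq> p" using vpq by (simp add: open_segment_def)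
    have comb: "(1 - u) * p $ k + u * q $ k = v $ k" for k using u(3) by simp
    have zero: "p $ k = 0" if "v $ k = 0" for k
      using convex_comb_eq_lower_bound[OF u(1,2), of "p $ k" "q $ k" 0] comb[of k] that p q
      by (simp add: scaled_simplex_def)
    have "p = v"
      using v
    proof
      assume "v = 0"
      then show "p = v" using zero by (simp add: vec_eq_iff)
    next
      assume "\<exists>j. v = axis j s"
      then obtain j where vj: "v = axis j s" by blast
      have "(1 - u) * - sum (($) p) UNIV + u * - sum (($) q) UNIV = - sum (($) v) UNIV"
        using u(3) by (simp add: sum.distrib sum_distrib_left flip: sum_negf)
      moreover have "sum (($) v) UNIV = s" using vj by (simp add: axis_def)
      ultimately have "- sum (($) p) UNIV = - s"
        using convex_comb_eq_lower_bound[OF u(1,2), of "- sum (($) p) UNIV" "- sum (($) q) UNIV" "- s"]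
          p q by (simp add: scaled_simplex_def)
      moreover have "p $ k = 0" if "k \<noteq> j" for k using zero that vj by (simp add: axis_def)
      ultimately have "p $ j = s" by (simp add: sum.remove[of UNIV j] sum.neutral)
      then show "p = v" using \<open>\<And>k. k \<noteq> j \<Longrightarrow> p $ k = 0\<close> vj by (simp add: vec_eq_iff axis_def)
    qed
    then show False using \<open>v \<noteq> p\<close> by simp
  qed
qed

lemma extreme_points_of_scaled_simplex:
  fixes s :: real
  assumes "0 \<le> s"
  shows "{y :: real^'n::finite. y extreme_point_of scaled_simplex s} = insert 0 (range (\<lambda>j. axis j s))"
  using extreme_point_of_scaled_simplex_cases extreme_point_of_scaled_simplex_vertex[OF assms]
  by blast

subsection \<open>Primitive lattice vectors\<close>

lemma primitive_on_ray_unique: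
  fixes w u v :: "real^'n::finite"
  assumes u: "u \<in> latt" "0 < c" "u = c *\<^sub>R w" "\<forall>t. 0 < t \<and> t < 1 \<longrightarrow> t *\<^sub>R u \<notin> latt"
    and v: "v \<in> latt" "0 < d" "v = d *\<^sub>R w" "\<forall>t. 0 < t \<and> t < 1 \<longrightarrow> t *\<^sub>R v \<notin> latt"
  shows "u = v"
proof -
  have not_less: "\<not> c' < d'"
    if "u' \<in> latt" "0 < c'" "u' = c' *\<^sub>R w" "0 < d'" "v' = d' *\<^sub>R w"
      "\<forall>t. 0 < t \<and> t < 1 \<longrightarrow> t *\<^sub>R v' \<notin> latt" for u' v' :: "real^'n" and c' d'
  proof
    assume "c' < d'"
    then have "0 < c' / d'" "c' / d' < 1" using that(2) by auto
    then have "(c' / d') *\<^sub>R v' \<notin> latt" using that(6) by blast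
    moreover have "(c' / d') *\<^sub>R v' = u'" using that(3-5) by simp
    ultimately show False using that(1) by simp
  qed
  have "c = d" using not_less[OF u(1-3) v(2-4)] not_less[OF v(1-3) u(2-4)] by linarith
  then show ?thesis using u(3) v(3) by simp
qed

lemma primitive_on_ray_exists:
  fixes w :: "real^'n::finite"
  assumes w: "w \<in> latt" "w \<noteq> 0"
  obtains c where "0 < c" "c \<le> 1" "c *\<^sub>R w \<in> latt"
    "\<forall>t. 0 < t \<and> t < 1 \<longrightarrow> t *\<^sub>R (c *\<^sub>R w) \<notin> latt"
proof -
  obtain j where j: "w $ j \<noteq> 0" using w(2) by (metis vec_eq_iff zero_index)
  obtain z where z: "w $ j = of_int z" using w(1) by (auto simp: latt_def elim!: Ints_cases)
  define N where "N = nat \<bar>z\<bar>"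
  have wj: "w $ j = real N \<or> w $ j = - real N" "1 \<le> N" using z j by (auto simp: N_def)
  \<comment> \<open>the admissible scalings are multiples of \<open>1/N\<close>; take the least one\<close>
  define K where "K = {m \<in> {1..N}. (real m / real N) *\<^sub>R w \<in> latt}"
  have "N \<in> K" using wj w(1) by (auto simp: K_def)
  moreover have "finite K" by (simp add: K_def)
  ultimately have m0: "Min K \<in> K" "\<And>m. m \<in> K \<Longrightarrow> Min K \<le> m" by (auto intro: Min_in)
  define m0 where "m0 = Min K"
  have m0N: "1 \<le> m0" "m0 \<le> N" using m0(1) by (auto simp: K_def m0_def)
  show ?thesis
  proof
    show "0 < real m0 / real N" "real m0 / real N \<le> 1" using m0N by auto
    show "(real m0 / real N) *\<^sub>R w \<in> latt" using m0(1) by (simp add: K_def m0_def)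
    show "\<forall>t. 0 < t \<and> t < 1 \<longrightarrow> t *\<^sub>R ((real m0 / real N) *\<^sub>R w) \<notin> latt"
    proof (intro allI impI notI)
      fix t :: real assume t: "0 < t \<and> t < 1" and tl: "t *\<^sub>R ((real m0 / real N) *\<^sub>R w) \<in> latt"
      have "t * real m0 / real N * w $ j \<in> \<int>" using tl by (auto simp: latt_def)
      then have "t * real m0 \<in> \<int>" using wj by (auto simp: minus_in_Ints_iff)
      then obtain m where m: "t * real m0 = of_int m" by (auto elim: Ints_cases)
      have "0 < t * real m0" "t * real m0 < real m0" using t m0N by auto
      then have mb: "0 < m" "m < int m0" using m by simp_all
      have "(real (nat m) / real N) *\<^sub>R w = t *\<^sub>R ((real m0 / real N) *\<^sub>R w)"
        using m mb by simp
      then have "nat m \<in> K" using mb m0N tl by (auto simp: K_def)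
      then have "m0 \<le> nat m" using m0(2) by (simp add: m0_def)
      then show False using mb by linarith
    qed
  qed
qed

lemma prim_eq_scaleR:
  fixes w :: "real^'n::finite"
  assumes "w \<in> latt" "w \<noteq> 0"
  obtains c where "0 < c" "c \<le> 1" "prim w = c *\<^sub>R w" "prim w \<in> latt"
proof -
  obtain c where c: "0 < c" "c \<le> 1" "c *\<^sub>R w \<in> latt"
    "\<forall>t. 0 < t \<and> t < 1 \<longrightarrow> t *\<^sub>R (c *\<^sub>R w) \<notin> latt"
    using primitive_on_ray_exists[OF assms] by blast
  have "prim w = c *\<^sub>R w"
    unfolding prim_def
  proof (rule the_equality)
    fix u assume "u \<in> latt \<and> (\<exists>d>0. u = d *\<^sub>R w) \<and> (\<forall>t. 0 < t \<and> t < 1 \<longrightarrow> t *\<^sub>R u \<notin> latt)"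
    then obtain d where "u \<in> latt" "0 < d" "u = d *\<^sub>R w" "\<forall>t. 0 < t \<and> t < 1 \<longrightarrow> t *\<^sub>R u \<notin> latt"
      by blast
    then show "u = c *\<^sub>R w" by (rule primitive_on_ray_unique[OF _ _ _ _ c(3) c(1) refl c(4)])
  qed (use c in auto)
  then show ?thesis using that c by simp
qed

subsection \<open>Facets of a full-dimensional convex set\<close>

lemma face_subset_supporting_hyperplane:
  fixes P F :: "'a::euclidean_space set"
  assumes "convex P" "F face_of P" "x \<in> rel_interior F" "\<forall>z\<in>P. b \<le> u \<bullet> z" "u \<bullet> x = b"
  shows "F \<subseteq> {z. u \<bullet> z = b}"
proof -
  have face: "(P \<inter> {z. u \<bullet> z = b}) face_of P"
    using assms(1,4) by (intro face_of_Int_supporting_hyperplane_ge) auto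
  have FP: "F \<subseteq> P" using assms(2) by (rule face_of_imp_subset)
  then have "x \<in> P \<inter> {z. u \<bullet> z = b} \<inter> rel_interior F"
    using assms(3,5) rel_interior_subset by blast
  then have "F \<subseteq> P \<inter> {z. u \<bullet> z = b}" using subset_of_face_of[OF face FP] by blast
  then show ?thesis by blast
qed

lemma facet_supporting_hyperplanes_parallel:
  fixes P F :: "'a::euclidean_space set"
  assumes P: "convex P" "aff_dim P = DIM('a)" and F: "F facet_of P" "x \<in> rel_interior F"
    and u: "u \<noteq> 0" "\<forall>z\<in>P. b \<le> u \<bullet> z" "u \<bullet> x = b"
    and v: "\<forall>z\<in>P. c \<le> v \<bullet> z" "v \<bullet> x = c"
    and d: "u \<bullet> d = 0"
  shows "v \<bullet> d = 0"
proof (rule ccontr)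
  assume vd: "v \<bullet> d \<noteq> 0"
  have face: "F face_of P" and dimF: "aff_dim F = aff_dim P - 1" using F(1) by (auto simp: facet_of_def)
  have Fu: "F \<subseteq> {z. u \<bullet> z = b}" and Fv: "F \<subseteq> {z. v \<bullet> z = c}"
    using face_subset_supporting_hyperplane[OF P(1) face F(2)] u(2,3) v by auto
  have xF: "x \<in> F" using F(2) rel_interior_subset by blast
  have hull: "affine hull F = {z. u \<bullet> z = b}"
  proof (rule affine_dim_equal)
    show "affine hull F \<subseteq> {z. u \<bullet> z = b}" using Fu affine_hyperplane by (rule hull_minimal)
    show "aff_dim (affine hull F) = aff_dim {z. u \<bullet> z = b}" using dimF P(2) u(1) by simp
  qed (use xF hull_subset affine_hyperplane in auto)
  obtain e where e: "0 < e" "ball x e \<inter> affine hull F \<subseteq> F"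
    using F(2) mem_rel_interior_ball by blast
  define t where "t = e / (2 * norm d)"
  have "d \<noteq> 0" using vd by auto
  then have t: "0 < t" "norm (t *\<^sub>R d) < e" using e(1) by (auto simp: t_def)
  have "x + t *\<^sub>R d \<in> ball x e" using t(2) by (simp add: dist_norm)
  moreover have "x + t *\<^sub>R d \<in> affine hull F" unfolding hull using u(3) d by (simp add: inner_add_right)
  ultimately have "x + t *\<^sub>R d \<in> F" using e(2) by blast
  then have "v \<bullet> (x + t *\<^sub>R d) = c" using Fv by blast
  then show False using v(2) t(1) vd by (simp add: inner_add_right)
qed

locale pn_framing =
  fixes ix :: "nat \<Rightarrow> 'n::finite" and n :: nat and a :: "nat \<Rightarrow> int"
  assumes n_ge_4: "n \<ge> 4"
    and ix: "bij_betw ix {1..n} (UNIV :: 'n set)"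
    and a_pos: "\<forall>i\<in>{1..n+1}. a i > 0"
    and a_mono: "\<forall>i\<in>{1..n}. a i \<le> a (i + 1)"
begin

definition idx :: "'n \<Rightarrow> nat" where "idx = inv_into {1..n} ix"

definition \<alpha> :: "nat \<Rightarrow> real" where "\<alpha> k = real_of_int (a k)"

definition \<sigma> :: real where "\<sigma> = (\<Sum>k=1..n+1. \<alpha> k)"

text \<open>Coordinates with respect to the ordering \<open>ix\<close>; the index \<open>n + 1\<close> is a dummy
  coordinate equal to \<open>0\<close>.\<close>

definition coord :: "real^'n \<Rightarrow> nat \<Rightarrow> real" where
  "coord x k = (if k \<in> {1..n} then x $ ix k else 0)"

definition wsum :: "real^'n \<Rightarrow> real" where
  "wsum x = (\<Sum>k=1..n. \<alpha> k * coord x k)"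

lemma idx_ix [simp]: "k \<in> {1..n} \<Longrightarrow> idx (ix k) = k"
  using ix by (simp add: idx_def bij_betw_def inv_into_f_f)

lemma ix_idx [simp]: "ix (idx j) = j"
  using ix by (metis UNIV_I bij_betw_def f_inv_into_f idx_def)

lemma idx_in: "idx j \<in> {1..n}"
  using ix by (metis UNIV_I bij_betw_def inv_into_into idx_def)

lemma all_ix: "(\<forall>j. P j) \<longleftrightarrow> (\<forall>k\<in>{1..n}. P (ix k))"
  by (metis idx_in ix_idx)

lemma ix_eq_iff [simp]: "m \<in> {1..n} \<Longrightarrow> k \<in> {1..n} \<Longrightarrow> ix m = ix k \<longleftrightarrow> m = k"
  by (metis idx_ix)

lemma sum_UNIV_ix: "(\<Sum>j\<in>UNIV. g j) = (\<Sum>k=1..n. g (ix k))"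
  using sum.reindex_bij_betw[OF ix, of g] by simp

lemma \<alpha>_pos: "k \<in> {1..n+1} \<Longrightarrow> 0 < \<alpha> k"
  using a_pos by (simp add: \<alpha>_def)

lemma \<alpha>_mono: "i \<in> {1..n+1} \<Longrightarrow> j \<le> n + 1 \<Longrightarrow> i \<le> j \<Longrightarrow> \<alpha> i \<le> \<alpha> j"
proof (induction j)
  case (Suc j)
  show ?case
  proof (cases "i = Suc j")
    case False
    then have "\<alpha> i \<le> \<alpha> j" using Suc by auto
    also have "\<alpha> j \<le> \<alpha> (Suc j)" using a_mono Suc False by (auto simp: \<alpha>_def)
    finally show ?thesis .
  qed simp
qed simp

lemma \<alpha>_int: "\<alpha> k \<in> \<int>"
  by (simp add: \<alpha>_def)

lemma \<sigma>_int: "\<sigma> \<in> \<int>"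
  by (simp add: \<sigma>_def \<alpha>_int Ints_sum)

lemma exists_other_index: "i \<in> {1..n+1} \<Longrightarrow> \<exists>m\<in>{1..n}. m \<noteq> i"
  using n_ge_4 by (cases "i = 1") (auto intro: bexI[of _ 1] bexI[of _ 2])

lemma \<alpha>_less_\<sigma>: "k \<in> {1..n+1} \<Longrightarrow> \<alpha> k < \<sigma>"
proof -
  assume k: "k \<in> {1..n+1}"
  then obtain l where l: "l \<in> {1..n+1}" "l \<noteq> k" using exists_other_index by force
  have "\<alpha> k + \<alpha> l = sum \<alpha> {k, l}" using l by simp
  also have "\<dots> \<le> \<sigma>" unfolding \<sigma>_def
    using k l \<alpha>_pos by (intro sum_mono2) (auto intro: less_imp_le)
  finally show ?thesis using \<alpha>_pos[OF l(1)] by simp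
qed

lemma \<sigma>_pos: "0 < \<sigma>"
  using \<alpha>_less_\<sigma>[of 1] \<alpha>_pos[of 1] by simp

lemma coord_eqI: "(\<And>k. k \<in> {1..n} \<Longrightarrow> coord x k = coord y k) \<Longrightarrow> x = y"
  by (metis coord_def idx_in ix_idx vec_eq_iff)

lemma coord_simps [simp]:
  "coord (x + y) k = coord x k + coord y k"
  "coord (x - y) k = coord x k - coord y k"
  "coord (c *\<^sub>R x) k = c * coord x k"
  "coord 0 k = 0"
  "coord x (n + 1) = 0"
  "coord x (Suc n) = 0"
  by (simp_all add: coord_def)

lemma coord_outside: "k \<notin> {1..n} \<Longrightarrow> coord x k = 0"
  unfolding coord_def by auto

lemma coord_axis: "m \<in> {1..n} \<Longrightarrow> coord (axis (ix m) c) k = (if k = m then c else 0)"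
  by (auto simp: coord_def axis_def)

lemma coord_latt: "x \<in> latt \<Longrightarrow> coord x k \<in> \<int>"
  by (simp add: coord_def latt_def)

lemma inner_eq_sum_coord: "x \<bullet> y = (\<Sum>k=1..n. coord x k * coord y k)"
  by (simp add: inner_vec_def sum_UNIV_ix coord_def)

lemma coord_vcol:
  "k \<in> {1..n+1} \<Longrightarrow> m \<in> {1..n} \<Longrightarrow> coord (vcol ix n k) m = (if k \<le> n then of_bool (m = k) else -1)"
  by (auto simp: coord_def vcol_def ebas_def axis_def)

lemma inner_vcol:
  assumes "k \<in> {1..n+1}"
  shows "vcol ix n k \<bullet> x = (if k \<le> n then coord x k else - (\<Sum>m=1..n. coord x m))"
proof (cases "k \<le> n")
  case True
  then show ?thesis using assms by (simp add: vcol_def ebas_def inner_axis' coord_def)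
qed (auto simp: vcol_def inner_vec_def sum_negf sum_UNIV_ix coord_def)

lemma wsum_simps [simp]:
  "wsum (x + y) = wsum x + wsum y"
  "wsum (x - y) = wsum x - wsum y"
  "wsum (c *\<^sub>R x) = c * wsum x"
  by (simp_all add: wsum_def algebra_simps sum.distrib sum_subtractf sum_distrib_left)

lemma wsum_axis: "m \<in> {1..n} \<Longrightarrow> wsum (axis (ix m) c) = \<alpha> m * c"
  by (simp add: wsum_def coord_axis if_distrib cong: if_cong)

lemma wsum_vcol: "k \<in> {1..n+1} \<Longrightarrow> wsum (vcol ix n k) = (if k \<le> n then \<alpha> k else \<alpha> (n+1) - \<sigma>)"
  by (auto simp: wsum_def coord_vcol \<sigma>_def sum_negf if_distrib cong: if_cong)

definition ashift :: "real^'n" where "ashift = (\<chi> j. \<alpha> (idx j))"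

definition vertex :: "nat \<Rightarrow> real^'n" where
  "vertex i = (if i \<in> {1..n} then axis (ix i) \<sigma> else 0) - ashift"

lemma coord_ashift [simp]: "k \<in> {1..n} \<Longrightarrow> coord ashift k = \<alpha> k"
  by (simp add: coord_def ashift_def)

lemma coord_vertex: "k \<in> {1..n} \<Longrightarrow> coord (vertex i) k = (if k = i then \<sigma> else 0) - \<alpha> k"
  by (auto simp: vertex_def coord_axis)

lemma inner_vertex: "i \<in> {1..n+1} \<Longrightarrow> vertex i \<bullet> x = \<sigma> * coord x i - wsum x"
proof -
  assume i: "i \<in> {1..n+1}"
  have "vertex i \<bullet> x = (\<Sum>k=1..n. (if k = i then \<sigma> * coord x k else 0) - \<alpha> k * coord x k)"
    unfolding inner_eq_sum_coord by (intro sum.cong) (auto simp: coord_vertex algebra_simps)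
  also have "\<dots> = \<sigma> * coord x i - wsum x"
    using i by (auto simp: sum_subtractf wsum_def coord_def)
  finally show ?thesis .
qed

lemma vertex_latt: "vertex i \<in> latt"
  by (simp add: latt_def vertex_def ashift_def axis_def \<sigma>_int \<alpha>_int)

lemma vertex_nonzero: "i \<in> {1..n+1} \<Longrightarrow> vertex i \<noteq> 0"
proof
  assume "i \<in> {1..n+1}" "vertex i = 0"
  moreover obtain m where "m \<in> {1..n}" "m \<noteq> i" using exists_other_index \<open>i \<in> {1..n+1}\<close> by blast
  ultimately show False using coord_vertex[of m i] \<alpha>_pos[of m] by simp
qed

lemma mem_Delta_a:
  "m \<in> Delta_a ix n a \<longleftrightarrow> (\<forall>k\<in>{1..n}. - \<alpha> k \<le> coord m k) \<and> (\<Sum>k=1..n. coord m k) \<le> \<alpha> (n+1)"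
proof -
  have "{1..n+1} = insert (n+1) {1..n}" by auto
  then show ?thesis by (auto simp: Delta_a_def inner_vcol \<alpha>_def)
qed

lemma mem_scaled_simplex_shift:
  "m + ashift \<in> scaled_simplex \<sigma> \<longleftrightarrow>
     (\<forall>k\<in>{1..n}. - \<alpha> k \<le> coord m k) \<and> (\<Sum>k=1..n. coord m k) \<le> \<alpha> (n+1)"
proof -
  have "(\<forall>j. 0 \<le> (m + ashift) $ j) \<longleftrightarrow> (\<forall>k\<in>{1..n}. - \<alpha> k \<le> coord m k)"
    by (subst all_ix) (auto simp: ashift_def coord_def add.commute minus_le_iff)
  moreover have "sum (($) (m + ashift)) UNIV \<le> \<sigma> \<longleftrightarrow> (\<Sum>k=1..n. coord m k) \<le> \<alpha> (n+1)"
    by (simp add: sum_UNIV_ix ashift_def sum.distrib coord_def \<sigma>_def)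
  ultimately show ?thesis by (simp add: scaled_simplex_def)
qed

lemma Delta_a_eq: "Delta_a ix n a = (\<lambda>y. y - ashift) ` scaled_simplex \<sigma>"
proof -
  have "(\<lambda>y. y - ashift) ` S = {m. m + ashift \<in> S}" for S
    by (auto intro: rev_image_eqI[of "_ + ashift"])
  then show ?thesis using mem_Delta_a mem_scaled_simplex_shift by auto
qed

lemma extreme_points_Delta_a: "{w. w extreme_point_of Delta_a ix n a} = vertex ` {1..n+1}"
proof -
  have "{w. w extreme_point_of Delta_a ix n a} = (\<lambda>y. y - ashift) ` insert 0 (range (\<lambda>j. axis j \<sigma>))"
    unfolding Delta_a_eq extreme_points_of_translation_subtract
      extreme_points_of_scaled_simplex[OF less_imp_le[OF \<sigma>_pos]] ..
  also have "range (\<lambda>j. axis j \<sigma>) = (\<lambda>j. axis j \<sigma>) ` ix ` {1..n}"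
    using ix by (simp add: bij_betw_def)
  also have "(\<lambda>y. y - ashift) ` insert 0 \<dots> = vertex ` {1..n+1}"
  proof -
    have "{1..n+1} = insert (n+1) {1..n}" by auto
    then have "vertex ` {1..n+1} = insert (vertex (n+1)) (vertex ` {1..n})" by simp
    moreover have "vertex ` {1..n} = (\<lambda>i. axis (ix i) \<sigma> - ashift) ` {1..n}"
      by (simp add: vertex_def)
    ultimately show ?thesis by (simp add: vertex_def image_image)
  qed
  finally show ?thesis .
qed

definition \<gamma> :: "nat \<Rightarrow> real" where
  "\<gamma> i = (SOME c. 0 < c \<and> c \<le> 1 \<and> prim (vertex i) = c *\<^sub>R vertex i \<and> prim (vertex i) \<in> latt)"

lemma prim_vertex:
  assumes "i \<in> {1..n+1}"
  shows "0 < \<gamma> i" "\<gamma> i \<le> 1" "prim (vertex i) = \<gamma> i *\<^sub>R vertex i" "\<gamma> i *\<^sub>R vertex i \<in> latt"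
proof -
  obtain c where "0 < c \<and> c \<le> 1 \<and> prim (vertex i) = c *\<^sub>R vertex i \<and> prim (vertex i) \<in> latt"
    using prim_eq_scaleR[OF vertex_latt vertex_nonzero[OF assms]] by blast
  then have "0 < \<gamma> i \<and> \<gamma> i \<le> 1 \<and> prim (vertex i) = \<gamma> i *\<^sub>R vertex i \<and> prim (vertex i) \<in> latt"
    unfolding \<gamma>_def by (rule someI)
  then show "0 < \<gamma> i" "\<gamma> i \<le> 1" "prim (vertex i) = \<gamma> i *\<^sub>R vertex i" "\<gamma> i *\<^sub>R vertex i \<in> latt"
    by auto
qed

lemma Lam_eq: "Lam ix n a = (\<lambda>i. \<gamma> i *\<^sub>R vertex i) ` {1..n+1}"
  unfolding Lam_def extreme_points_Delta_a image_image using prim_vertex(3) by simp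

lemma \<gamma>_mult_\<alpha>_ge_1:
  assumes i: "i \<in> {1..n+1}" and m: "m \<in> {1..n}" "m \<noteq> i"
  shows "1 \<le> \<gamma> i * \<alpha> m"
proof (rule Ints_pos_imp_ge_1)
  have "coord (\<gamma> i *\<^sub>R vertex i) m = - (\<gamma> i * \<alpha> m)" using m by (simp add: coord_vertex)
  then show "\<gamma> i * \<alpha> m \<in> \<int>"
    using coord_latt[OF prim_vertex(4)[OF i], of m] by (simp add: minus_in_Ints_iff)
  show "0 < \<gamma> i * \<alpha> m" using prim_vertex(1)[OF i] \<alpha>_pos m(1) by simp
qed

text \<open>\<open>amax i\<close> is the largest \<open>\<alpha> k\<close> with \<open>k \<noteq> i\<close>.\<close>

definition amax :: "nat \<Rightarrow> real" where
  "amax i = (if i \<le> n then \<alpha> (n+1) else \<alpha> n)"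

lemma \<alpha>_le_amax: "i \<in> {1..n+1} \<Longrightarrow> k \<in> {1..n+1} \<Longrightarrow> k \<noteq> i \<Longrightarrow> \<alpha> k \<le> amax i"
  by (auto simp: amax_def intro: \<alpha>_mono)

lemma neg_inner_vcol_vertex:
  assumes "i \<in> {1..n+1}" "k \<in> {1..n+1}"
  shows "- (vcol ix n k \<bullet> vertex i) = \<alpha> k - (if k = i then \<sigma> else 0)"
proof -
  have "coord (vcol ix n k) i = (if k \<le> n then of_bool (i = k) else - of_bool (i \<le> n))"
    using assms by (cases "i \<le> n") (auto simp: coord_vcol coord_outside)
  moreover have "i \<le> n \<or> i = n + 1" "k \<le> n \<or> k = n + 1" using assms by auto
  ultimately show ?thesis
    using assms by (auto simp: inner_commute[of _ "vertex i"] inner_vertex wsum_vcol)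
qed

lemma bvec_vertex:
  assumes i: "i \<in> {1..n+1}"
  shows "bvec ix n (\<gamma> i *\<^sub>R vertex i) = \<gamma> i * amax i"
proof -
  define f where "f k = \<gamma> i * (\<alpha> k - (if k = i then \<sigma> else 0))" for k
  have \<gamma>: "0 < \<gamma> i" using prim_vertex(1)[OF i] .
  obtain m where m: "m \<in> {1..n}" "m \<noteq> i" using exists_other_index[OF i] by blast
  have "{- (vcol ix n k \<bullet> (\<gamma> i *\<^sub>R vertex i)) | k. k \<in> {1..n+1}} =
        (\<lambda>k. \<gamma> i * - (vcol ix n k \<bullet> vertex i)) ` {1..n+1}"
    by auto
  also have "\<dots> = f ` {1..n+1}"
    using neg_inner_vcol_vertex[OF i] by (intro image_cong) (auto simp: f_def)
  finally have "{- (vcol ix n k \<bullet> (\<gamma> i *\<^sub>R vertex i)) | k. k \<in> {1..n+1}} = f ` {1..n+1}" .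
  moreover have "Max (insert 1 (f ` {1..n+1})) = \<gamma> i * amax i"
  proof (rule Max_eqI)
    have "\<alpha> k - (if k = i then \<sigma> else 0) \<le> amax i" if "k \<in> {1..n+1}" for k
      using \<alpha>_le_amax[OF i that] \<alpha>_less_\<sigma>[OF i] \<alpha>_le_amax[OF i, of m] \<alpha>_pos[of m] m by auto
    then have "f k \<le> \<gamma> i * amax i" if "k \<in> {1..n+1}" for k
      using that \<gamma> by (simp add: f_def mult_left_mono)
    moreover have "1 \<le> \<gamma> i * amax i"
    proof -
      have "1 \<le> \<gamma> i * \<alpha> m" by (rule \<gamma>_mult_\<alpha>_ge_1[OF i m])
      also have "\<dots> \<le> \<gamma> i * amax i" using \<alpha>_le_amax[OF i, of m] m \<gamma> by (simp add: mult_left_mono)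
      finally show ?thesis .
    qed
    ultimately show "y \<le> \<gamma> i * amax i" if "y \<in> insert 1 (f ` {1..n+1})" for y
      using that by auto
    define k0 where "k0 = (if i \<le> n then n + 1 else n)"
    have "k0 \<in> {1..n+1}" "k0 \<noteq> i" "\<alpha> k0 = amax i" using i n_ge_4 by (auto simp: k0_def amax_def)
    then show "\<gamma> i * amax i \<in> insert 1 (f ` {1..n+1})"
      by (auto simp: f_def intro!: image_eqI[of _ _ k0])
  qed simp
  ultimately show ?thesis by (simp add: bvec_def)
qed

lemma scaled_halfspace_iff: "0 < c \<Longrightarrow> - (c * b) \<le> (c *\<^sub>R v) \<bullet> x \<longleftrightarrow> - b \<le> v \<bullet> x"
  by (metis inner_scaleR_left mult_le_cancel_left_pos mult_minus_right)

lemma Delta_b_eq: "Delta_b ix n a = {x. \<forall>i\<in>{1..n+1}. - amax i \<le> vertex i \<bullet> x}"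
proof -
  have "- bvec ix n (\<gamma> i *\<^sub>R vertex i) \<le> (\<gamma> i *\<^sub>R vertex i) \<bullet> x \<longleftrightarrow> - amax i \<le> vertex i \<bullet> x"
    if "i \<in> {1..n+1}" for i x
    using scaled_halfspace_iff[OF prim_vertex(1)[OF that]] bvec_vertex[OF that] by simp
  then show ?thesis unfolding Delta_b_def Lam_eq by auto
qed

definition depth :: "nat \<Rightarrow> real" where "depth i = 1 / \<gamma> i"

lemma Delta_mK_eq: "Delta_mK ix n a = {x. \<forall>i\<in>{1..n+1}. - depth i \<le> vertex i \<bullet> x}"
proof -
  have "- 1 \<le> (\<gamma> i *\<^sub>R vertex i) \<bullet> x \<longleftrightarrow> - depth i \<le> vertex i \<bullet> x" if "i \<in> {1..n+1}" for i x
    using scaled_halfspace_iff[OF prim_vertex(1)[OF that], of "depth i"] prim_vertex(1)[OF that]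
    by (simp add: depth_def)
  then show ?thesis unfolding Delta_mK_def Lam_eq by auto
qed

lemma depth_ge_1: "i \<in> {1..n+1} \<Longrightarrow> 1 \<le> depth i"
  using prim_vertex(1,2) by (simp add: depth_def)

lemma depth_le_\<alpha>:
  assumes i: "i \<in> {1..n+1}" and k: "k \<in> {1..n+1}" "k \<noteq> i"
  shows "depth i \<le> \<alpha> k"
proof -
  obtain m where m: "m \<in> {1..n}" "m \<noteq> i" "\<alpha> m \<le> \<alpha> k"
  proof (cases "k \<le> n")
    case False
    obtain m where "m \<in> {1..n}" "m \<noteq> i" using exists_other_index[OF i] by blast
    then show ?thesis using that \<alpha>_mono[of m k] k False by auto
  qed (use that k in auto)
  have "depth i \<le> \<alpha> m"
    using \<gamma>_mult_\<alpha>_ge_1[OF i m(1,2)] prim_vertex(1)[OF i]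
    by (simp add: depth_def divide_le_eq mult.commute)
  then show ?thesis using m(3) by simp
qed

lemma depth_less_\<sigma>: "i \<in> {1..n+1} \<Longrightarrow> depth i < \<sigma>"
  using exists_other_index depth_le_\<alpha> \<alpha>_less_\<sigma>
  by (metis atLeastAtMost_iff le_SucI Suc_eq_plus1 order.strict_trans1)

subsubsection \<open>Lattice points of \<open>\<nabla>\<close> and of \<open>\<Delta>\<^sub>b\<close>\<close>

definition nabla_pts :: "(real^'n) set" where
  "nabla_pts = insert 0 (vcol ix n ` {1..n+1})"

text \<open>Both \<open>\<nabla>\<close> (with \<open>\<beta> = 1\<close>) and \<open>\<Delta>\<^sub>b\<close> (with \<open>\<beta> = \<alpha>\<close>) lie in a region of
  the following shape; as soon as \<open>B < 2 \<beta> k\<close> its only lattice points are those of \<open>\<nabla>\<close>.\<close>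

definition wregion :: "(nat \<Rightarrow> real) \<Rightarrow> real \<Rightarrow> (real^'n) set" where
  "wregion \<beta> B = {x. (\<Sum>k=1..n. \<beta> k * coord x k) \<le> B \<and>
     (\<forall>i\<in>{1..n}. (\<Sum>k=1..n+1. \<beta> k * (coord x k - coord x i)) \<le> \<beta> (n+1))}"

lemma vcol_latt: "k \<in> {1..n+1} \<Longrightarrow> vcol ix n k \<in> latt"
  by (auto simp: vcol_def ebas_def latt_def axis_def)

lemma nabla_pts_latt: "nabla_pts \<subseteq> latt"
  using vcol_latt by (auto simp: nabla_pts_def latt_def)

lemma wregion_latt_nonneg:
  assumes x: "x \<in> wregion \<beta> B \<inter> latt" and nonneg: "\<forall>k\<in>{1..n}. 0 \<le> coord x k"
    and \<beta>: "\<forall>k\<in>{1..n}. 0 < \<beta> k \<and> B < 2 * \<beta> k"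
  shows "x \<in> nabla_pts"
proof -
  have \<beta>_k: "0 < \<beta> k" "B < 2 * \<beta> k" if "k \<in> {1..n}" for k using \<beta> that by auto
  have terms: "0 \<le> \<beta> k * coord x k" if "k \<in> {1..n}" for k
    using nonneg \<beta>_k[OF that] that by simp
  have sum_le: "(\<Sum>k\<in>K. \<beta> k * coord x k) \<le> B" if "K \<subseteq> {1..n}" for K
  proof -
    have "(\<Sum>k\<in>K. \<beta> k * coord x k) \<le> (\<Sum>k=1..n. \<beta> k * coord x k)"
      using that terms by (intro sum_mono2) auto
    then show ?thesis using x by (simp add: wregion_def)
  qed
  have ge_1: "1 \<le> coord x k" if "k \<in> {1..n}" "coord x k \<noteq> 0" for k
  proof (rule Ints_pos_imp_ge_1)
    show "coord x k \<in> \<int>" using x coord_latt by blast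
    show "0 < coord x k" using nonneg that by force
  qed
  have le_1: "coord x k \<le> 1" if k: "k \<in> {1..n}" for k
  proof (rule ccontr)
    assume "\<not> coord x k \<le> 1"
    then have "2 \<le> coord x k" using Ints_less_imp_add_1_le[of 1 "coord x k"] coord_latt x by auto
    moreover note \<beta>_k[OF k]
    ultimately have "\<beta> k * 2 \<le> \<beta> k * coord x k" by (intro mult_left_mono) auto
    then have "B < \<beta> k * coord x k" using \<open>B < 2 * \<beta> k\<close> by linarith
    then show False using sum_le[of "{k}"] k by simp
  qed
  have unique: "k = l" if "k \<in> {1..n}" "l \<in> {1..n}" "coord x k \<noteq> 0" "coord x l \<noteq> 0" for k l
  proof (rule ccontr)
    assume "k \<noteq> l"
    then have "\<beta> k * coord x k + \<beta> l * coord x l \<le> B" using sum_le[of "{k, l}"] that by simp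
    moreover have "\<beta> k \<le> \<beta> k * coord x k" "\<beta> l \<le> \<beta> l * coord x l"
      using ge_1 \<beta>_k that by simp_all
    ultimately show False using \<beta>_k(2)[OF that(1)] \<beta>_k(2)[OF that(2)] by linarith
  qed
  show ?thesis
  proof (cases "\<exists>k\<in>{1..n}. coord x k \<noteq> 0")
    case False
    then have "x = 0" by (intro coord_eqI) auto
    then show ?thesis by (simp add: nabla_pts_def)
  next
    case True
    then obtain k where k: "k \<in> {1..n}" "coord x k \<noteq> 0" by blast
    have "x = vcol ix n k"
    proof (rule coord_eqI)
      fix m assume m: "m \<in> {1..n}"
      show "coord x m = coord (vcol ix n k) m"
      proof (cases "m = k")
        case True
        then show ?thesis using ge_1[OF k] le_1[OF k(1)] k by (simp add: coord_vcol)
      next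
        case False
        then have "coord x m = 0" using unique[OF k(1) m k(2)] by auto
        then show ?thesis using False k m by (simp add: coord_vcol)
      qed
    qed
    then show ?thesis using k by (simp add: nabla_pts_def)
  qed
qed

lemma wregion_latt_neg:
  assumes x: "x \<in> wregion \<beta> B \<inter> latt" and neg: "\<exists>k\<in>{1..n}. coord x k < 0"
    and \<beta>: "\<forall>k\<in>{1..n+1}. 0 < \<beta> k"
  shows "x = vcol ix n (n+1)"
proof -
  have \<beta>_pos: "0 < \<beta> k" if "k \<in> {1..n+1}" for k using \<beta> that by blast
  have "Min (coord x ` {1..n}) \<in> coord x ` {1..n}" using n_ge_4 by (intro Min_in) auto
  then obtain i where i: "i \<in> {1..n}" "coord x i = Min (coord x ` {1..n})" by auto
  then have min: "coord x i \<le> coord x k" if "k \<in> {1..n}" for k using that by simp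
  have "coord x i < 0" using neg min by force
  then have "coord x i \<le> -1" using Ints_less_imp_add_1_le[of "coord x i" 0] coord_latt x by auto
  have terms: "0 \<le> \<beta> k * (coord x k - coord x i)" if "k \<in> {1..n}" for k
    using min[OF that] \<beta>_pos[of k] that by simp
  have "\<beta> (n+1) * - coord x i + (\<Sum>k=1..n. \<beta> k * (coord x k - coord x i)) \<le> \<beta> (n+1)"
    using x i(1) by (simp add: wregion_def)
  moreover have "\<beta> (n+1) * 1 \<le> \<beta> (n+1) * - coord x i"
    using \<open>coord x i \<le> -1\<close> \<beta>_pos[of "n+1"] by (intro mult_left_mono) auto
  moreover have "0 \<le> (\<Sum>k=1..n. \<beta> k * (coord x k - coord x i))" using terms by (intro sum_nonneg) auto
  ultimately have last: "\<beta> (n+1) * - coord x i = \<beta> (n+1) * 1"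
    and sum0: "(\<Sum>k=1..n. \<beta> k * (coord x k - coord x i)) = 0" by linarith+
  have "\<beta> (n+1) \<noteq> 0" using \<beta>_pos[of "n+1"] by simp
  then have "coord x i = -1" using mult_left_cancel[of "\<beta> (n+1)" "- coord x i" 1] last by simp
  have all0: "\<forall>k\<in>{1..n}. \<beta> k * (coord x k - coord x i) = 0"
    using sum_nonneg_eq_0_iff[of "{1..n}" "\<lambda>k. \<beta> k * (coord x k - coord x i)"] sum0 terms
    by simp
  have "coord x k = coord x i" if "k \<in> {1..n}" for k
  proof -
    have "\<beta> k * (coord x k - coord x i) = 0" using all0 that by blast
    then show ?thesis using \<beta>_pos[of k] that by simp
  qed
  then show ?thesis using \<open>coord x i = -1\<close> by (intro coord_eqI) (auto simp: coord_vcol)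
qed

lemma wregion_latt_subset:
  assumes "\<forall>k\<in>{1..n+1}. 0 < \<beta> k" "\<forall>k\<in>{1..n}. B < 2 * \<beta> k"
  shows "wregion \<beta> B \<inter> latt \<subseteq> nabla_pts"
proof
  fix x assume x: "x \<in> wregion \<beta> B \<inter> latt"
  show "x \<in> nabla_pts"
  proof (cases "\<exists>k\<in>{1..n}. coord x k < 0")
    case True
    have "x = vcol ix n (n+1)" by (rule wregion_latt_neg[OF x True assms(1)])
    then show ?thesis unfolding nabla_pts_def by (intro insertI2 image_eqI[of _ _ "n+1"]) auto
  next
    case False
    then have "\<forall>k\<in>{1..n}. 0 \<le> coord x k" by (simp add: not_less)
    moreover have "\<forall>k\<in>{1..n}. 0 < \<beta> k \<and> B < 2 * \<beta> k" using assms by simp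
    ultimately show ?thesis by (rule wregion_latt_nonneg[OF x])
  qed
qed

lemma convex_wregion: "convex (wregion \<beta> B)"
proof -
  have lin: "linear (\<lambda>x. \<Sum>k\<in>K. \<beta> k * (coord x k - c * coord x i))" for K c i
    by (rule linearI) (simp_all add: algebra_simps sum_distrib_left flip: sum.distrib)
  have halfspace: "convex {x. (\<Sum>k\<in>K. \<beta> k * (coord x k - c * coord x i)) \<le> b}" for K c i b
    using convex_linear_vimage[OF lin convex_real_interval(2)] by (simp add: vimage_def)
  have "wregion \<beta> B = {x. (\<Sum>k=1..n. \<beta> k * (coord x k - 0 * coord x 0)) \<le> B} \<inter>
      (\<Inter>i\<in>{1..n}. {x. (\<Sum>k=1..n+1. \<beta> k * (coord x k - 1 * coord x i)) \<le> \<beta> (n+1)})"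
    by (auto simp: wregion_def)
  then show ?thesis using halfspace by (simp only: convex_Int convex_INT)
qed
lemma sum_vcol: "(\<Sum>k=1..n+1. vcol ix n k) = 0"
proof (rule coord_eqI)
  fix m assume m: "m \<in> {1..n}"
  have "coord (\<Sum>k=1..n+1. vcol ix n k) m = (\<Sum>k=1..n+1. coord (vcol ix n k) m)"
    using m by (simp add: coord_def sum_component)
  also have "\<dots> = (\<Sum>k=1..n. of_bool (m = k)) - 1"
    using m by (simp add: coord_vcol)
  also have "\<dots> = 0" using m by simp
  finally show "coord (\<Sum>k=1..n+1. vcol ix n k) m = coord 0 m" by simp
qed

lemma nabla_pts_subset_nabla: "nabla_pts \<subseteq> nabla ix n"
proof -
  have "(\<Sum>k\<in>{1..n+1}. (1 / real (n+1)) *\<^sub>R vcol ix n k) \<in> nabla ix n"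
    unfolding nabla_def by (rule convex_sum) (auto simp: hull_inc)
  moreover have "(\<Sum>k\<in>{1..n+1}. (1 / real (n+1)) *\<^sub>R vcol ix n k) = 0"
    by (simp only: scaleR_sum_right[symmetric] sum_vcol scaleR_zero_right)
  ultimately have "0 \<in> nabla ix n" by simp
  then show ?thesis by (auto simp: nabla_pts_def nabla_def hull_inc)
qed

lemma sum_coord_vcol:
  "k \<in> {1..n+1} \<Longrightarrow> (\<Sum>m=1..n. coord (vcol ix n k) m) = (if k \<le> n then 1 else - real n)"
  by (simp add: coord_vcol)

lemma nabla_subset_wregion: "nabla ix n \<subseteq> wregion (\<lambda>_. 1) 1"
  unfolding nabla_def
proof (rule hull_minimal)
  show "vcol ix n ` {1..n+1} \<subseteq> wregion (\<lambda>_. 1) 1"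
  proof clarify
    fix k assume k: "k \<in> {1..n+1}"
    have "(\<Sum>m=1..n+1. coord (vcol ix n k) m - coord (vcol ix n k) i) \<le> 1" if "i \<in> {1..n}" for i
      using sum_coord_vcol[OF k] coord_vcol[OF k that] that
      by (simp add: sum_subtractf algebra_simps)
    then show "vcol ix n k \<in> wregion (\<lambda>_. 1) 1"
      using sum_coord_vcol[OF k] by (simp add: wregion_def)
  qed
qed (rule convex_wregion)

lemma nabla_latt: "nabla ix n \<inter> latt = nabla_pts"
proof
  show "nabla ix n \<inter> latt \<subseteq> nabla_pts"
    using nabla_subset_wregion wregion_latt_subset[of "\<lambda>_. 1" 1] by auto
  show "nabla_pts \<subseteq> nabla ix n \<inter> latt"
    using nabla_pts_subset_nabla nabla_pts_latt by blast
qed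

lemma card_nabla_pts: "card nabla_pts = n + 2"
proof -
  have "inj_on (vcol ix n) {1..n+1}"
  proof
    fix k l assume k: "k \<in> {1..n+1}" and l: "l \<in> {1..n+1}" and kl: "vcol ix n k = vcol ix n l"
    have "(\<Sum>m=1..n. coord (vcol ix n k) m) = (\<Sum>m=1..n. coord (vcol ix n l) m)" using kl by simp
    then have "k \<le> n \<longleftrightarrow> l \<le> n" using sum_coord_vcol[OF k] sum_coord_vcol[OF l] n_ge_4
      by (auto split: if_splits)
    moreover have "k = l" if "k \<le> n"
      using arg_cong[OF kl, of "\<lambda>v. coord v k"] coord_vcol[OF k, of k] coord_vcol[OF l, of k]
        that k \<open>k \<le> n \<longleftrightarrow> l \<le> n\<close> by (auto split: if_splits)
    ultimately show "k = l" using k l by fastforce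
  qed
  moreover have "0 \<notin> vcol ix n ` {1..n+1}"
  proof
    assume "0 \<in> vcol ix n ` {1..n+1}"
    then obtain k where k: "k \<in> {1..n+1}" "vcol ix n k = 0" by auto
    then have "(\<Sum>m=1..n. coord (vcol ix n k) m) = 0" by simp
    then show False using sum_coord_vcol[OF k(1)] n_ge_4 by (auto split: if_splits)
  qed
  ultimately show ?thesis by (simp add: nabla_pts_def card_image)
qed

lemma lpts_nabla: "lpts (nabla ix n) = n + 2"
  by (simp add: lpts_def nabla_latt card_nabla_pts)

lemma bvec_ge_1: "1 \<le> bvec ix n lam"
  unfolding bvec_def by (rule Max_ge) auto

lemma bvec_ge: "k \<in> {1..n+1} \<Longrightarrow> - (vcol ix n k \<bullet> lam) \<le> bvec ix n lam"
  unfolding bvec_def by (rule Max_ge) auto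

lemma nabla_pts_subset_Delta_b: "nabla_pts \<subseteq> Delta_b ix n a"
proof -
  have "- bvec ix n lam \<le> 0" for lam using bvec_ge_1[of lam] by simp
  moreover have "- bvec ix n lam \<le> lam \<bullet> vcol ix n k" if "k \<in> {1..n+1}" for lam k
    using bvec_ge[OF that, of lam] by (simp add: inner_commute)
  ultimately show ?thesis by (auto simp: nabla_pts_def Delta_b_def)
qed

lemma sum_weighted_diff: "(\<Sum>k=1..n+1. \<alpha> k * (coord x k - coord x i)) = wsum x - \<sigma> * coord x i"
proof -
  have "(\<Sum>k=1..n+1. \<alpha> k * (coord x k - coord x i)) =
      (\<Sum>k=1..n+1. \<alpha> k * coord x k) - (\<Sum>k=1..n+1. \<alpha> k) * coord x i"
    by (simp only: right_diff_distrib sum_subtractf sum_distrib_right)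
  then show ?thesis by (simp add: wsum_def \<sigma>_def)
qed

lemma Delta_b_subset_wregion: "Delta_b ix n a \<subseteq> wregion \<alpha> (\<alpha> n)"
proof
  fix x assume "x \<in> Delta_b ix n a"
  then have x: "- amax i \<le> \<sigma> * coord x i - wsum x" if "i \<in> {1..n+1}" for i
    using that by (simp add: Delta_b_eq inner_vertex)
  show "x \<in> wregion \<alpha> (\<alpha> n)"
    unfolding wregion_def sum_weighted_diff
  proof (intro CollectI conjI ballI)
    show "(\<Sum>k=1..n. \<alpha> k * coord x k) \<le> \<alpha> n" using x[of "n+1"] by (simp add: amax_def wsum_def)
    fix i assume "i \<in> {1..n}"
    then show "wsum x - \<sigma> * coord x i \<le> \<alpha> (n+1)" using x[of i] by (simp add: amax_def)
  qed
qed

lemma floor_ratio_eq_1_iff: "\<lfloor>\<alpha> n / \<alpha> 1\<rfloor> = 1 \<longleftrightarrow> \<alpha> n < 2 * \<alpha> 1"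
proof -
  have "0 < \<alpha> 1" "\<alpha> 1 \<le> \<alpha> n" using \<alpha>_pos[of 1] \<alpha>_mono[of 1 n] n_ge_4 by auto
  then show ?thesis by (simp add: floor_eq_iff divide_less_eq le_divide_eq)
qed

lemma Delta_b_latt_subset: "\<alpha> n < 2 * \<alpha> 1 \<Longrightarrow> Delta_b ix n a \<inter> latt \<subseteq> nabla_pts"
proof -
  assume "\<alpha> n < 2 * \<alpha> 1"
  moreover have "\<alpha> 1 \<le> \<alpha> k" if "k \<in> {1..n}" for k using \<alpha>_mono[of 1 k] that by auto
  ultimately have "\<forall>k\<in>{1..n}. \<alpha> n < 2 * \<alpha> k" by force
  then show ?thesis
    using Delta_b_subset_wregion wregion_latt_subset[of \<alpha> "\<alpha> n"] \<alpha>_pos by blast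
qed

lemma two_e1_in_Delta_b:
  assumes "2 * \<alpha> 1 \<le> \<alpha> n"
  shows "axis (ix 1) 2 \<in> Delta_b ix n a \<inter> latt - nabla_pts"
proof -
  define y where "y = axis (ix 1) (2::real)"
  have one: "1 \<in> {1..n}" using n_ge_4 by simp
  have coord_y: "coord y k = (if k = 1 then 2 else 0)" for k
    using coord_axis[OF one] coord_outside by (cases "k \<in> {1..n}") (auto simp: y_def)
  have "- amax i \<le> vertex i \<bullet> y" if i: "i \<in> {1..n+1}" for i
  proof -
    have "vertex i \<bullet> y = (if i = 1 then 2 * \<sigma> else 0) - 2 * \<alpha> 1"
      using inner_vertex[OF i] coord_y wsum_axis[OF one] by (simp add: y_def)
    moreover have "\<alpha> n \<le> amax i" using \<alpha>_mono[of n "n+1"] n_ge_4 by (simp add: amax_def)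
    moreover have "0 \<le> amax i" using \<alpha>_pos[of n] \<alpha>_pos[of "n+1"] n_ge_4 by (simp add: amax_def)
    ultimately show ?thesis using assms \<alpha>_less_\<sigma>[of 1] by auto
  qed
  then have "y \<in> Delta_b ix n a" by (simp add: Delta_b_eq)
  moreover have "y \<in> latt" by (simp add: y_def latt_def axis_def)
  moreover have "y \<notin> nabla_pts"
  proof
    assume "y \<in> nabla_pts"
    then consider "y = 0" | k where "k \<in> {1..n+1}" "y = vcol ix n k" by (auto simp: nabla_pts_def)
    then show False
    proof cases
      case 1
      then show False using coord_y[of 1] by simp
    next
      case 2
      then show False using coord_y[of 1] coord_vcol[OF 2(1) one] by (auto simp: of_bool_def split: if_splits)
    qed
  qed
  ultimately show ?thesis by (simp add: y_def)
qed

lemma Delta_b_latt_eq_iff: "Delta_b ix n a \<inter> latt = nabla_pts \<longleftrightarrow> \<lfloor>\<alpha> n / \<alpha> 1\<rfloor> = 1"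
proof
  assume eq: "Delta_b ix n a \<inter> latt = nabla_pts"
  show "\<lfloor>\<alpha> n / \<alpha> 1\<rfloor> = 1"
  proof (rule ccontr)
    assume "\<lfloor>\<alpha> n / \<alpha> 1\<rfloor> \<noteq> 1"
    then have "2 * \<alpha> 1 \<le> \<alpha> n" using floor_ratio_eq_1_iff by linarith
    then show False using two_e1_in_Delta_b eq by blast
  qed
next
  assume "\<lfloor>\<alpha> n / \<alpha> 1\<rfloor> = 1"
  then have "Delta_b ix n a \<inter> latt \<subseteq> nabla_pts"
    using floor_ratio_eq_1_iff Delta_b_latt_subset by blast
  then show "Delta_b ix n a \<inter> latt = nabla_pts" using nabla_pts_subset_Delta_b nabla_pts_latt by blast
qed
subsubsection \<open>Facets of \<open>\<Delta>\<^sub>-\<^sub>K\<close> have no interior lattice points\<close>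

lemma convex_Delta_mK: "convex (Delta_mK ix n a)"
  unfolding Delta_mK_eq by (simp add: Collect_ball_eq convex_INT convex_halfspace_ge)

lemma strict_subset_interior_Delta_mK:
  "{x. \<forall>i\<in>{1..n+1}. - depth i < vertex i \<bullet> x} \<subseteq> interior (Delta_mK ix n a)"
proof (rule interior_maximal)
  show "open {x. \<forall>i\<in>{1..n+1}. - depth i < vertex i \<bullet> x}"
    by (simp add: Collect_ball_eq open_INT open_halfspace_gt)
qed (auto simp: Delta_mK_eq)

lemma aff_dim_Delta_mK: "aff_dim (Delta_mK ix n a) = CARD('n)"
proof -
  have "0 \<in> interior (Delta_mK ix n a)"
    using strict_subset_interior_Delta_mK depth_ge_1 by fastforce
  then show ?thesis using aff_dim_nonempty_interior by fastforce
qed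

text \<open>With \<open>y\<^sub>l = x\<^sub>l - x\<^sub>j\<close> the tight inequality reads \<open>\<Sum>\<^sub>l \<alpha>\<^sub>l y\<^sub>l = depth j\<close>, where
  the \<open>y\<^sub>l\<close> are nonnegative integers and \<open>depth j \<le> \<alpha>\<^sub>l\<close> for \<open>l \<noteq> j\<close>. So exactly one \<open>y\<^sub>k\<close>
  is nonzero, and every index \<open>i \<noteq> j, k\<close> gives a second tight inequality.\<close>

lemma latt_tight_Delta_mK_twice:
  assumes x: "x \<in> latt" "x \<in> Delta_mK ix n a" and j: "j \<in> {1..n+1}"
    and tight: "vertex j \<bullet> x = - depth j"
  shows "\<exists>i\<in>{1..n+1}. i \<noteq> j \<and> vertex i \<bullet> x = - depth i"
proof -
  define y where "y k = coord x k - coord x j" for k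
  have y_int: "y k \<in> \<int>" for k using coord_latt[OF x(1)] by (simp add: y_def)
  have G: "(\<Sum>k=1..n+1. \<alpha> k * y k) = depth j"
    unfolding y_def sum_weighted_diff using tight inner_vertex[OF j] by simp
  have inner_y: "vertex i \<bullet> x = \<sigma> * y i - depth j" if "i \<in> {1..n+1}" for i
    using inner_vertex[OF that, of x] inner_vertex[OF j, of x] tight by (simp add: y_def algebra_simps)
  have ineq: "- depth i \<le> \<sigma> * y i - depth j" if "i \<in> {1..n+1}" for i
  proof -
    have "- depth i \<le> vertex i \<bullet> x" using x(2) that unfolding Delta_mK_eq by blast
    then show ?thesis using inner_y[OF that] by simp
  qed
  have y_nonneg: "0 \<le> y i" if i: "i \<in> {1..n+1}" for i
  proof -
    have "\<sigma> * (- 1) < \<sigma> * y i"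
      using ineq[OF i] depth_ge_1[OF j] depth_less_\<sigma>[OF i] by simp
    then have "- 1 < y i" by (simp only: mult_less_cancel_left_pos[OF \<sigma>_pos])
    then show ?thesis using Ints_less_imp_add_1_le[of "-1" "y i"] y_int by simp
  qed
  have terms: "0 \<le> \<alpha> k * y k" if "k \<in> {1..n+1}" for k
    using y_nonneg[OF that] \<alpha>_pos[OF that] by simp
  have "\<exists>k\<in>{1..n+1}. 1 \<le> y k"
  proof (rule ccontr)
    assume none: "\<not> (\<exists>k\<in>{1..n+1}. 1 \<le> y k)"
    have "y k = 0" if "k \<in> {1..n+1}" for k
      using none that y_nonneg[OF that] Ints_pos_imp_ge_1[OF y_int, of k] by force
    then have "(\<Sum>k=1..n+1. \<alpha> k * y k) = 0" by simp
    then show False using G depth_ge_1[OF j] by simp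
  qed
  then obtain k where k: "k \<in> {1..n+1}" "1 \<le> y k" by blast
  have "k \<noteq> j" using k by (auto simp: y_def)
  have single: "\<alpha> k * y k \<le> depth j" unfolding G[symmetric]
    using k terms by (intro member_le_sum) auto
  have "\<alpha> k \<le> \<alpha> k * y k" using k \<alpha>_pos[OF k(1)] by simp
  moreover have "depth j \<le> \<alpha> k" using depth_le_\<alpha>[OF j k(1) \<open>k \<noteq> j\<close>] .
  ultimately have \<alpha>k: "\<alpha> k = depth j" "\<alpha> k * y k = depth j" using single by linarith+
  obtain i where i: "i \<in> {1..n+1}" "i \<noteq> j" "i \<noteq> k"
  proof -
    have "card {j, k} < card {1..n+1}" using n_ge_4 by (simp add: card_insert_if)
    then obtain i where "i \<in> {1..n+1}" "i \<notin> {j, k}"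
      by (metis card_mono finite_atLeastAtMost finite.insertI finite.emptyI not_le subsetI)
    then show ?thesis using that by blast
  qed
  have "y i = 0"
  proof (rule ccontr)
    assume "y i \<noteq> 0"
    then have "\<alpha> i \<le> \<alpha> i * y i"
      using Ints_pos_imp_ge_1[OF y_int] y_nonneg[OF i(1)] \<alpha>_pos[OF i(1)] by simp
    moreover have "\<alpha> k * y k + \<alpha> i * y i \<le> depth j"
    proof -
      have "(\<Sum>l\<in>{k, i}. \<alpha> l * y l) \<le> (\<Sum>l=1..n+1. \<alpha> l * y l)"
        using k i terms by (intro sum_mono2) auto
      then show ?thesis using G i(3) by simp
    qed
    ultimately show False using \<alpha>k \<alpha>_pos[OF i(1)] by linarith
  qed
  then have "depth j \<le> depth i" using ineq[OF i(1)] by simp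
  moreover have "depth i \<le> \<alpha> k" using depth_le_\<alpha>[OF i(1) k(1)] i(3) by simp
  ultimately have "vertex i \<bullet> x = - depth i" using inner_y[OF i(1)] \<open>y i = 0\<close> \<alpha>k by simp
  then show ?thesis using i by blast
qed

lemma Delta_mK_facet_rel_interior_latt:
  assumes F: "F facet_of Delta_mK ix n a"
  shows "rel_interior F \<inter> latt = {}"
proof (rule ccontr)
  let ?P = "Delta_mK ix n a"
  assume "rel_interior F \<inter> latt \<noteq> {}"
  then obtain x where xF: "x \<in> rel_interior F" and xl: "x \<in> latt" by blast
  have face: "F face_of ?P" "F \<noteq> ?P" using F by (auto simp: facet_of_def)
  have xP: "x \<in> ?P" using xF rel_interior_subset face_of_imp_subset[OF face(1)] by blast
  have supp: "\<forall>z\<in>?P. - depth i \<le> vertex i \<bullet> z" if "i \<in> {1..n+1}" for i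
    using that by (simp add: Delta_mK_eq)
  have "\<exists>j\<in>{1..n+1}. vertex j \<bullet> x = - depth j"
  proof (rule ccontr)
    assume none: "\<not> (\<exists>j\<in>{1..n+1}. vertex j \<bullet> x = - depth j)"
    have "- depth i < vertex i \<bullet> x" if "i \<in> {1..n+1}" for i
    proof -
      have "- depth i \<le> vertex i \<bullet> x" using supp[OF that] xP by blast
      moreover have "vertex i \<bullet> x \<noteq> - depth i" using none that by blast
      ultimately show ?thesis by simp
    qed
    then have "x \<in> interior ?P" using strict_subset_interior_Delta_mK by blast
    then show False
      using face_of_disjoint_rel_interior[OF face] xF rel_interior_subset
        interior_subset_rel_interior by blast
  qed
  then obtain j where j: "j \<in> {1..n+1}" "vertex j \<bullet> x = - depth j" by blast
  have "\<exists>i\<in>{1..n+1}. i \<noteq> j \<and> vertex i \<bullet> x = - depth i"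
    by (rule latt_tight_Delta_mK_twice[OF xl xP j])
  then obtain i where i: "i \<in> {1..n+1}" "i \<noteq> j" "vertex i \<bullet> x = - depth i" by blast
  \<comment> \<open>of the two tight indices, at least one (\<open>q\<close>) is a genuine coordinate\<close>
  have "\<exists>p q. p \<in> {1..n+1} \<and> q \<in> {1..n} \<and> p \<noteq> q \<and>
      vertex p \<bullet> x = - depth p \<and> vertex q \<bullet> x = - depth q"
  proof (cases "i \<le> n")
    case True
    then have "i \<in> {1..n}" using i(1) by simp
    then show ?thesis using i j by blast
  next
    case False
    then have "j \<in> {1..n}" using i j by auto
    then show ?thesis using i j by blast
  qed
  then obtain p q where pq: "p \<in> {1..n+1}" "q \<in> {1..n}" "p \<noteq> q"
    "vertex p \<bullet> x = - depth p" "vertex q \<bullet> x = - depth q" by blast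
  have q: "q \<in> {1..n+1}" using pq(2) by simp
  have "card {p, q} < card {1..n}" using n_ge_4 by (simp add: card_insert_if)
  then obtain m where m: "m \<in> {1..n}" "m \<notin> {p, q}"
    by (metis card_mono finite_atLeastAtMost finite.insertI finite.emptyI not_le subsetI)
  define d where "d = \<alpha> q *\<^sub>R axis (ix m) (1::real) - \<alpha> m *\<^sub>R axis (ix q) 1"
  have coord_d: "coord d k = \<alpha> q * of_bool (k = m) - \<alpha> m * of_bool (k = q)" for k
    using coord_axis[OF m(1)] coord_axis[OF pq(2)] by (simp add: d_def)
  have wsum_d: "wsum d = 0" using wsum_axis[OF m(1)] wsum_axis[OF pq(2)] by (simp add: d_def)
  have "vertex p \<bullet> d = 0" using inner_vertex[OF pq(1), of d] coord_d wsum_d pq(3) m(2) by auto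
  then have "vertex q \<bullet> d = 0"
    using facet_supporting_hyperplanes_parallel[OF convex_Delta_mK _ F xF
        vertex_nonzero[OF pq(1)] supp[OF pq(1)] pq(4) supp[OF q] pq(5)]
      aff_dim_Delta_mK by simp
  moreover have "vertex q \<bullet> d \<noteq> 0"
    using inner_vertex[OF q, of d] coord_d wsum_d m(2) \<sigma>_pos \<alpha>_pos[of m] m(1) by auto
  ultimately show False by contradiction
qed

lemma sum_facets_ilpts_Delta_mK: "(\<Sum>\<Theta>\<in>{F. F facet_of Delta_mK ix n a}. int (ilpts \<Theta>)) = 0"
  using Delta_mK_facet_rel_interior_latt by (simp add: ilpts_def)

lemma mYv_eq: "mYv ix n a = int (lpts (Delta_b ix n a)) - 1 - int n"
  by (simp add: mYv_def sum_facets_ilpts_Delta_mK)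

lemma lpts_Delta_b_eq_iff: "lpts (Delta_b ix n a) = n + 2 \<longleftrightarrow> Delta_b ix n a \<inter> latt = nabla_pts"
proof
  assume card: "lpts (Delta_b ix n a) = n + 2"
  then have fin: "finite (Delta_b ix n a \<inter> latt)" by (simp add: lpts_def card_ge_0_finite)
  have sub: "nabla_pts \<subseteq> Delta_b ix n a \<inter> latt"
    using nabla_pts_subset_Delta_b nabla_pts_latt by blast
  have "card nabla_pts = card (Delta_b ix n a \<inter> latt)"
    using card card_nabla_pts by (simp add: lpts_def)
  then show "Delta_b ix n a \<inter> latt = nabla_pts" using card_subset_eq[OF fin sub] by simp
next
  assume "Delta_b ix n a \<inter> latt = nabla_pts"
  then show "lpts (Delta_b ix n a) = n + 2" by (simp add: lpts_def card_nabla_pts)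
qed

lemma lhull_Delta_b_eq_iff: "lhull (Delta_b ix n a) = nabla ix n \<longleftrightarrow> Delta_b ix n a \<inter> latt = nabla_pts"
proof
  assume "lhull (Delta_b ix n a) = nabla ix n"
  then have "Delta_b ix n a \<inter> latt \<subseteq> nabla ix n \<inter> latt"
    unfolding lhull_def using hull_subset[of "Delta_b ix n a \<inter> latt" convex] by blast
  then show "Delta_b ix n a \<inter> latt = nabla_pts"
    using nabla_latt nabla_pts_subset_Delta_b nabla_pts_latt by blast
next
  assume "Delta_b ix n a \<inter> latt = nabla_pts"
  moreover have "0 \<in> convex hull (vcol ix n ` {1..n+1})"
    using nabla_pts_subset_nabla unfolding nabla_pts_def nabla_def by blast
  then have "convex hull nabla_pts = nabla ix n"
    unfolding nabla_pts_def nabla_def by (rule hull_redundant)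
  ultimately show "lhull (Delta_b ix n a) = nabla ix n" by (simp add: lhull_def)
qed

end

theorem proposition5p6:
  fixes ix :: "nat \<Rightarrow> 'n::finite" and n :: nat and a :: "nat \<Rightarrow> int"
  assumes n4: "n \<ge> 4"
    and ix: "bij_betw ix {1..n} (UNIV :: 'n set)"
    and apos: "\<forall>i\<in>{1..n+1}. a i > 0"
    and amono: "\<forall>i\<in>{1..n}. a i \<le> a (i + 1)"
    and agcd: "Gcd (a ` {1..n+1}) = 1"
    and condA: "convex hull (nabla' ix n a \<inter> latt) =
        convex hull (insert 0 {of_int \<lfloor>of_int (a n) / of_int (a (n - i + 1)) :: real\<rfloor> *\<^sub>R ebas ix i
                                | i. i \<in> {1..n}})"
    and condB: "\<exists>i\<in>{1..n+1}. \<exists>j\<in>{1..n+1}. i \<noteq> j \<and> dgcd n a i = 1 \<and> dgcd n a j = 1"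
  shows "(mYv ix n a = 1 \<longleftrightarrow>
           (lpts (Delta_b ix n a) = lpts (nabla ix n) \<and> lpts (nabla ix n) = n + 2))
       \<and> ((lpts (Delta_b ix n a) = lpts (nabla ix n) \<and> lpts (nabla ix n) = n + 2) \<longleftrightarrow>
           lhull (Delta_b ix n a) = nabla ix n)
       \<and> (lhull (Delta_b ix n a) = nabla ix n \<longleftrightarrow>
           \<lfloor>of_int (a n) / of_int (a 1) :: real\<rfloor> = 1)"
proof -
  interpret pn_framing ix n a using n4 ix apos amono by unfold_locales
  have "mYv ix n a = 1 \<longleftrightarrow> lpts (Delta_b ix n a) = n + 2" unfolding mYv_eq by presburger
  moreover have "\<lfloor>of_int (a n) / of_int (a 1) :: real\<rfloor> = \<lfloor>\<alpha> n / \<alpha> 1\<rfloor>" by (simp add: \<alpha>_def)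
  ultimately show ?thesis
    unfolding lpts_nabla lpts_Delta_b_eq_iff lhull_Delta_b_eq_iff Delta_b_latt_eq_iff by simp
qed

end
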